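(* Let $(T,\rho_{T})$ and $(Z,\rho_{Z})$ be metric spaces, and define the metric $\rho_{T}\times\rho_{Z}$ on $T\times Z$ by $(\rho_{T}\times\rho_{Z})((t_{1},z_{1}),(t_{2},z_{2}))=\rho_{T}(t_{1},t_{2})+\rho_{Z}(z_{1},z_{2})$. Then \[\gamma_{2}(T\times Z,\rho_{T}\times\rho_{Z})\leq 3\gamma_{2}(T,\rho_{T})+3\gamma_{2}(Z,\rho_{Z}).\]
   Context: Let $N_{0}=1$ and $N_{k}=2^{2^{k}}$ for $k\geq1$. For a metric space $(T,\rho)$, a sequence $T_{0},T_{1},\ldots\subset T$ is admissible if $|T_{k}|\leq N_{k}$ for all $k\geq0$, and \[\gamma_{2}(T,\rho)=\inf_{\text{admissible }(T_{k})}\ \sup_{t\in T}\sum_{k=0}^{\infty}2^{k/2}\rho(t,T_{k}),\] where $\rho(t,T_{k})=\inf_{t_{k}\in T_{k}}\rho(t,t_{k})$. *)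

theory Defs
  imports "HOL-Analysis.Analysis"
begin

definition Nk :: "nat \<Rightarrow> nat" where
  "Nk k = (if k = 0 then 1 else 2 ^ (2 ^ k))"

text \<open>Distance from a point to a set; the infimum of the empty set is +infinity.\<close>
definition dist_set :: "('a \<Rightarrow> 'a \<Rightarrow> real) \<Rightarrow> 'a \<Rightarrow> 'a set \<Rightarrow> ennreal" where
  "dist_set \<rho> t A = (INF s\<in>A. ennreal (\<rho> t s))"

definition admissible :: "'a set \<Rightarrow> (nat \<Rightarrow> 'a set) \<Rightarrow> bool" where
  "admissible T Ts \<longleftrightarrow> (\<forall>k. Ts k \<subseteq> T \<and> finite (Ts k) \<and> card (Ts k) \<le> Nk k)"

definition gamma2 :: "'a set \<Rightarrow> ('a \<Rightarrow> 'a \<Rightarrow> real) \<Rightarrow> ennreal" where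
  "gamma2 T \<rho> = (INF Ts\<in>{Ts. admissible T Ts}.
      SUP t\<in>T. (\<Sum>k. ennreal (2 powr (real k / 2)) * dist_set \<rho> t (Ts k)))"

definition sum_metric :: "('a \<Rightarrow> 'a \<Rightarrow> real) \<Rightarrow> ('b \<Rightarrow> 'b \<Rightarrow> real)
    \<Rightarrow> ('a \<times> 'b) \<Rightarrow> ('a \<times> 'b) \<Rightarrow> real" where
  "sum_metric \<rho>T \<rho>Z p q = \<rho>T (fst p) (fst q) + \<rho>Z (snd p) (snd q)"

end

theory Submission
  imports Defs
begin

text \<open>Given admissible sequences \<open>A\<close> for \<open>T\<close> and \<open>B\<close> for \<open>Z\<close>, the sets
  \<open>C k = A (k - 1) \<times> B (k - 1)\<close> (natural-number subtraction, so \<open>C 0 = C 1\<close>) form an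
  admissible sequence for \<open>T \<times> Z\<close>, because \<open>N (k - 1)\<^sup>2 \<le> N k\<close>. The distance to a product
  set is at most the sum of the distances to its factors; the index shift costs a factor \<open>\<surd>2\<close>
  in the weights \<open>2 powr (k / 2)\<close>, and the extra term \<open>k = 0\<close> is bounded by the first terms
  of the two chaining sums. Hence \<open>\<gamma>\<^sub>2(T \<times> Z) \<le> (1 + \<surd>2) (\<gamma>\<^sub>2(T) + \<gamma>\<^sub>2(Z))\<close>, and
  \<open>1 + \<surd>2 \<le> 3\<close>.\<close>

lemma INF_const_add_ennreal: "c + (INF i\<in>I. f i) = (INF i\<in>I. c + f i :: ennreal)"
proof (cases "I = {}")
  case False
  have "(\<lambda>x. c + x) (Inf (f ` I)) = (INF y\<in>f ` I. c + y)"
    by (rule continuous_at_Inf_mono) (auto simp: mono_def False intro!: continuous_intros)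
  then show ?thesis by (simp add: image_comp)
qed simp

lemma INF_add_INF_ennreal:
  "(INF i\<in>I. f i) + (INF j\<in>J. g j) = (INF i\<in>I. INF j\<in>J. f i + g j :: ennreal)"
proof -
  have "(INF i\<in>I. f i) + (INF j\<in>J. g j) = (INF i\<in>I. (INF j\<in>J. g j) + f i)"
    by (subst add.commute) (rule INF_const_add_ennreal)
  also have "\<dots> = (INF i\<in>I. INF j\<in>J. f i + g j)"
    by (intro INF_cong refl, subst add.commute, rule INF_const_add_ennreal)
  finally show ?thesis .
qed

lemma INF_mult_left_ennreal:
  assumes "c \<noteq> 0" and "c < top"
  shows "c * (INF i\<in>I. f i) = (INF i\<in>I. c * f i :: ennreal)"
proof (cases "I = {}")
  case True
  then show ?thesis using assms by (simp add: ennreal_mult_top)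
next
  case False
  have "continuous_on UNIV (\<lambda>x. c * x)"
    using assms(2) by (intro ennreal_continuous_on_cmult continuous_on_id)
  then have "continuous (at (Inf (f ` I))) ((*) c)"
    by (simp add: continuous_on_eq_continuous_within)
  then have cont: "continuous (at_right (Inf (f ` I))) ((*) c)"
    by (rule continuous_within_subset) simp
  have "(\<lambda>x. c * x) (Inf (f ` I)) = (INF y\<in>f ` I. c * y)"
    by (rule continuous_at_Inf_mono[OF _ cont]) (auto simp: mono_def False mult_left_mono)
  then show ?thesis by (simp add: image_comp)
qed

lemma ennreal_plus_le: "ennreal (x + y) \<le> ennreal x + ennreal y"
  by (simp add: ennreal_plus_if ennreal_leI)

lemma suminf_le_shift_ennreal:
  fixes f g :: "nat \<Rightarrow> ennreal"
  assumes "f 0 \<le> g 0" and "\<And>j. f (Suc j) \<le> c * g j"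
  shows "(\<Sum>k. f k) \<le> (1 + c) * (\<Sum>k. g k)"
proof -
  have "(\<Sum>k. f k) = (\<Sum>j. f (Suc j)) + f 0"
    using suminf_offset[of f 1] by simp
  also have "\<dots> \<le> (\<Sum>j. c * g j) + g 0"
    using assms by (intro add_mono suminf_le) auto
  also have "\<dots> \<le> c * (\<Sum>j. g j) + (\<Sum>j. g j)"
    using sum_le_suminf[of g "{0}"] by (intro add_mono) auto
  finally show ?thesis by (simp add: distrib_right add.commute)
qed

lemma Nk_pred_square_le: "Nk (k - 1) ^ 2 \<le> Nk k"
proof (cases k)
  case (Suc m)
  show ?thesis
  proof (cases "m = 0")
    case False
    then have "Nk m ^ 2 = Nk (Suc m)"
      by (simp add: Nk_def power_mult[symmetric] mult.commute)
    then show ?thesis using Suc by simp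
  qed (simp add: Suc Nk_def)
qed (simp add: Nk_def)

lemma admissible_Times_shift:
  assumes "admissible T A" and "admissible Z B"
  shows "admissible (T \<times> Z) (\<lambda>k. A (k - 1) \<times> B (k - 1))"
  unfolding admissible_def
proof (intro allI conjI)
  fix k
  have "card (A (k - 1)) * card (B (k - 1)) \<le> Nk (k - 1) * Nk (k - 1)"
    using assms unfolding admissible_def by (intro mult_le_mono) auto
  also have "\<dots> \<le> Nk k"
    using Nk_pred_square_le[of k] by (simp add: power2_eq_square)
  finally show "card (A (k - 1) \<times> B (k - 1)) \<le> Nk k"
    by (simp add: card_cartesian_product)
qed (use assms in \<open>auto simp: admissible_def\<close>)

lemma dist_set_Times_le:
  "dist_set (sum_metric \<rho>T \<rho>Z) (t, z) (A \<times> B) \<le> dist_set \<rho>T t A + dist_set \<rho>Z z B"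
proof -
  have "dist_set (sum_metric \<rho>T \<rho>Z) (t, z) (A \<times> B) \<le> ennreal (\<rho>T t a) + ennreal (\<rho>Z z b)"
    if "a \<in> A" "b \<in> B" for a b
  proof -
    have "dist_set (sum_metric \<rho>T \<rho>Z) (t, z) (A \<times> B) \<le> ennreal (sum_metric \<rho>T \<rho>Z (t, z) (a, b))"
      unfolding dist_set_def using that by (intro INF_lower) auto
    also have "\<dots> \<le> ennreal (\<rho>T t a) + ennreal (\<rho>Z z b)"
      unfolding sum_metric_def by (simp add: ennreal_plus_le)
    finally show ?thesis .
  qed
  then show ?thesis
    unfolding dist_set_def INF_add_INF_ennreal by (auto intro!: INF_greatest)
qed

definition chaining_sum :: "('a \<Rightarrow> 'a \<Rightarrow> real) \<Rightarrow> (nat \<Rightarrow> 'a set) \<Rightarrow> 'a \<Rightarrow> ennreal" where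
  "chaining_sum \<rho> Ts t = (\<Sum>k. ennreal (2 powr (real k / 2)) * dist_set \<rho> t (Ts k))"

lemma gamma2_eq_INF_chaining_sum:
  "gamma2 T \<rho> = (INF Ts\<in>{Ts. admissible T Ts}. SUP t\<in>T. chaining_sum \<rho> Ts t)"
  by (simp add: gamma2_def chaining_sum_def)

lemma two_powr_Suc_half: "2 powr (real (Suc k) / 2) = sqrt 2 * 2 powr (real k / 2)"
  by (simp add: powr_half_sqrt[symmetric] powr_add[symmetric] add_divide_distrib)

lemma chaining_sum_Times_shift_le:
  "chaining_sum (sum_metric \<rho>T \<rho>Z) (\<lambda>k. A (k - 1) \<times> B (k - 1)) (t, z)
     \<le> ennreal (1 + sqrt 2) * (chaining_sum \<rho>T A t + chaining_sum \<rho>Z B z)"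
proof -
  let ?w = "\<lambda>k::nat. ennreal (2 powr (real k / 2))"
  let ?d = "\<lambda>k. dist_set \<rho>T t (A k) + dist_set \<rho>Z z (B k)"
  have "chaining_sum (sum_metric \<rho>T \<rho>Z) (\<lambda>k. A (k - 1) \<times> B (k - 1)) (t, z)
      \<le> (1 + ennreal (sqrt 2)) * (\<Sum>k. ?w k * ?d k)"
    unfolding chaining_sum_def
  proof (rule suminf_le_shift_ennreal)
    show "?w 0 * dist_set (sum_metric \<rho>T \<rho>Z) (t, z) (A (0 - 1) \<times> B (0 - 1)) \<le> ?w 0 * ?d 0"
      by (simp add: dist_set_Times_le)
    fix j
    have "?w (Suc j) = ennreal (sqrt 2) * ?w j"
      by (subst two_powr_Suc_half) (simp add: ennreal_mult)
    then show "?w (Suc j) * dist_set (sum_metric \<rho>T \<rho>Z) (t, z) (A (Suc j - 1) \<times> B (Suc j - 1))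
        \<le> ennreal (sqrt 2) * (?w j * ?d j)"
      by (simp add: mult.assoc mult_left_mono dist_set_Times_le)
  qed
  also have "(\<Sum>k. ?w k * ?d k) = chaining_sum \<rho>T A t + chaining_sum \<rho>Z B z"
    unfolding chaining_sum_def distrib_left by (rule suminf_add[symmetric]) auto
  finally show ?thesis by simp
qed

lemma gamma2_Times_le_SUP_chaining_sum:
  assumes "admissible T A" and "admissible Z B"
  shows "gamma2 (T \<times> Z) (sum_metric \<rho>T \<rho>Z)
    \<le> ennreal (1 + sqrt 2) * ((SUP t\<in>T. chaining_sum \<rho>T A t) + (SUP z\<in>Z. chaining_sum \<rho>Z B z))"
    (is "_ \<le> ?c * (?SA + ?SB)")
proof -
  have "gamma2 (T \<times> Z) (sum_metric \<rho>T \<rho>Z)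
      \<le> (SUP p\<in>T \<times> Z. chaining_sum (sum_metric \<rho>T \<rho>Z) (\<lambda>k. A (k - 1) \<times> B (k - 1)) p)"
    unfolding gamma2_eq_INF_chaining_sum
    using admissible_Times_shift[OF assms] by (intro INF_lower) simp
  also have "\<dots> \<le> ?c * (?SA + ?SB)"
  proof (rule SUP_least)
    fix p assume "p \<in> T \<times> Z"
    then obtain t z where p: "p = (t, z)" and "t \<in> T" "z \<in> Z" by blast
    have "chaining_sum (sum_metric \<rho>T \<rho>Z) (\<lambda>k. A (k - 1) \<times> B (k - 1)) (t, z)
        \<le> ?c * (chaining_sum \<rho>T A t + chaining_sum \<rho>Z B z)"
      by (rule chaining_sum_Times_shift_le)
    also have "\<dots> \<le> ?c * (?SA + ?SB)"
      using \<open>t \<in> T\<close> \<open>z \<in> Z\<close> by (intro mult_left_mono add_mono SUP_upper) auto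
    finally show "chaining_sum (sum_metric \<rho>T \<rho>Z) (\<lambda>k. A (k - 1) \<times> B (k - 1)) p \<le> ?c * (?SA + ?SB)"
      unfolding p .
  qed
  finally show ?thesis .
qed

lemma gamma2_Times_le:
  "gamma2 (T \<times> Z) (sum_metric \<rho>T \<rho>Z) \<le> ennreal (1 + sqrt 2) * (gamma2 T \<rho>T + gamma2 Z \<rho>Z)"
proof -
  let ?c = "ennreal (1 + sqrt 2)"
  let ?S = "\<lambda>T \<rho> Ts. SUP t\<in>T. chaining_sum \<rho> Ts t"
  have "gamma2 (T \<times> Z) (sum_metric \<rho>T \<rho>Z)
      \<le> (INF A\<in>{A. admissible T A}. INF B\<in>{B. admissible Z B}. ?c * (?S T \<rho>T A + ?S Z \<rho>Z B))"
    by (intro INF_greatest gamma2_Times_le_SUP_chaining_sum) simp_all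
  also have "\<dots> = (INF A\<in>{A. admissible T A}. ?c * (INF B\<in>{B. admissible Z B}. ?S T \<rho>T A + ?S Z \<rho>Z B))"
    by (intro INF_cong refl INF_mult_left_ennreal[symmetric]) simp_all
  also have "\<dots> = ?c * (INF A\<in>{A. admissible T A}. INF B\<in>{B. admissible Z B}. ?S T \<rho>T A + ?S Z \<rho>Z B)"
    by (rule INF_mult_left_ennreal[symmetric]) simp_all
  also have "\<dots> = ?c * (gamma2 T \<rho>T + gamma2 Z \<rho>Z)"
    unfolding gamma2_eq_INF_chaining_sum INF_add_INF_ennreal ..
  finally show ?thesis .
qed

theorem lemma2p1:
  fixes T :: "'a set" and \<rho>T :: "'a \<Rightarrow> 'a \<Rightarrow> real"
    and Z :: "'b set" and \<rho>Z :: "'b \<Rightarrow> 'b \<Rightarrow> real"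
  assumes "Metric_space T \<rho>T" and "Metric_space Z \<rho>Z"
  shows "gamma2 (T \<times> Z) (sum_metric \<rho>T \<rho>Z) \<le> 3 * gamma2 T \<rho>T + 3 * gamma2 Z \<rho>Z"
proof -
  have "1 + sqrt 2 \<le> (3::real)"
    using sqrt2_less_2 by linarith
  then have "ennreal (1 + sqrt 2) \<le> 3"
    by (metis ennreal_leI ennreal_numeral)
  have "gamma2 (T \<times> Z) (sum_metric \<rho>T \<rho>Z) \<le> ennreal (1 + sqrt 2) * (gamma2 T \<rho>T + gamma2 Z \<rho>Z)"
    by (rule gamma2_Times_le)
  also have "\<dots> \<le> 3 * (gamma2 T \<rho>T + gamma2 Z \<rho>Z)"
    using \<open>ennreal (1 + sqrt 2) \<le> 3\<close> by (rule mult_right_mono) simp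
  finally show ?thesis
    by (simp only: distrib_left)
qed

end
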